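(* Let $A$ be a nonempty set of positive integers and $n$ a positive integer. Then (a) $\displaystyle\sum_{k=1}^{n}N^p_A(k)\big(q^e_A(n-k)-q^o_A(n-k)\big)=\tau_A(n)$; (b) $\displaystyle\sum_{k=1}^{n}N^q_A(k)\big(p^e_A(n-k)-p^o_A(n-k)\big)=\tau^s_A(n)$.
   Context: For a set $A$ of positive integers: $N^p_A(n)$ (resp. $N^q_A(n)$) is the total number of parts, summed over all partitions (resp. partitions into pairwise distinct parts) of $n$ with all parts in $A$. $p^e_A(n)$ (resp. $p^o_A(n)$) is the number of partitions of $n$ with parts in $A$ having an even (resp. odd) number of parts; $q^e_A(n)$, $q^o_A(n)$ are the analogous counts for partitions into distinct parts from $A$; conventions $p^e_A(0)=q^e_A(0)=1$, $p^o_A(0)=q^o_A(0)=0$. $\tau_A(n)=\#\{a\in A:a\mid n\}$ and $\tau^s_A(n)=\sum_{a\in A,\,a\mid n}(-1)^{n/a-1}$. *)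

theory Defs
  imports Main "HOL-Library.Multiset"
begin

definition partitions_A :: "nat set \<Rightarrow> nat \<Rightarrow> nat multiset set" where
  "partitions_A A n = {M. set_mset M \<subseteq> A \<and> sum_mset M = n}"

definition dpartitions_A :: "nat set \<Rightarrow> nat \<Rightarrow> nat multiset set" where
  "dpartitions_A A n = {M. set_mset M \<subseteq> A \<and> sum_mset M = n \<and> (\<forall>x. count M x \<le> 1)}"

definition Np :: "nat set \<Rightarrow> nat \<Rightarrow> nat" where
  "Np A n = (\<Sum>M\<in>partitions_A A n. size M)"

definition Nq :: "nat set \<Rightarrow> nat \<Rightarrow> nat" where
  "Nq A n = (\<Sum>M\<in>dpartitions_A A n. size M)"

definition pe :: "nat set \<Rightarrow> nat \<Rightarrow> nat" where
  "pe A n = card {M\<in>partitions_A A n. even (size M)}"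

definition po :: "nat set \<Rightarrow> nat \<Rightarrow> nat" where
  "po A n = card {M\<in>partitions_A A n. odd (size M)}"

definition qe :: "nat set \<Rightarrow> nat \<Rightarrow> nat" where
  "qe A n = card {M\<in>dpartitions_A A n. even (size M)}"

definition qo :: "nat set \<Rightarrow> nat \<Rightarrow> nat" where
  "qo A n = card {M\<in>dpartitions_A A n. odd (size M)}"

definition tauA :: "nat set \<Rightarrow> nat \<Rightarrow> nat" where
  "tauA A n = card {a\<in>A. a dvd n}"

definition tauA_s :: "nat set \<Rightarrow> nat \<Rightarrow> int" where
  "tauA_s A n = (\<Sum>a\<in>{a\<in>A. a dvd n}. (-1::int) ^ (n div a - 1))"

end

theory Submission
  imports Defs "HOL-Library.Disjoint_Sets"
begin

text \<open>
  Count parts by marking one of them: a marked part of \<open>M\<close> is a pair \<open>(a, j)\<close> with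
  \<open>1 \<le> j \<le> count M a\<close>. In (a), removing \<open>j\<close> copies of \<open>a\<close> turns the left side into
  a sum over \<open>a \<in> A\<close>, \<open>j \<ge> 1\<close>, \<open>a j \<le> n\<close> of the number of pairs \<open>(U, D)\<close> of
  total \<open>n - a j\<close>, \<open>U\<close> a partition and \<open>D\<close> a partition into distinct parts, counted
  with sign \<open>(-1)^#D\<close>. Moving the least part between \<open>U\<close> and \<open>D\<close> is a sign-reversing
  involution whose only fixed point is the empty pair, so only the terms with \<open>a j = n\<close>
  remain. In (b), removing the marked part \<open>a\<close> of a partition into distinct parts leaves
  pairs \<open>(U, D)\<close> of total \<open>n - a\<close> with \<open>a \<notin> D\<close>, signed by \<open>(-1)^#U\<close>; moving the
  least part other than \<open>a\<close> leaves only \<open>U = {#a, ..., a#}\<close>, \<open>D = {#}\<close>, which exists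
  iff \<open>a dvd n\<close> and has sign \<open>(-1)^(n/a - 1)\<close>.
\<close>

lemma size_le_sum_mset_nat:
  assumes "0 \<notin># M" shows "size M \<le> sum_mset (M :: nat multiset)"
  using assms by (induction M) auto

lemma finite_msets_sum_le:
  assumes "0 \<notin> B"
  shows "finite {M :: nat multiset. set_mset M \<subseteq> B \<and> sum_mset M \<le> m}"
proof (rule finite_subset)
  show "finite (\<Union>k\<le>m. multisets_of_size {1..m} k)" by auto
  show "{M. set_mset M \<subseteq> B \<and> sum_mset M \<le> m} \<subseteq> (\<Union>k\<le>m. multisets_of_size {1..m} k)"
  proof clarify
    fix M :: "nat multiset" assume M: "set_mset M \<subseteq> B" "sum_mset M \<le> m"
    then have "0 \<notin># M" using assms by auto
    have "x \<in> {1..m}" if "x \<in># M" for x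
    proof -
      have "x \<le> sum_mset M" using that by (simp add: sum_mset.remove)
      moreover have "x \<noteq> 0" using that \<open>0 \<notin># M\<close> by metis
      ultimately show ?thesis using M(2) by simp
    qed
    then have "set_mset M \<subseteq> {1..m}" by blast
    moreover have "size M \<le> m"
      using M(2) size_le_sum_mset_nat[OF \<open>0 \<notin># M\<close>] by simp
    ultimately show "M \<in> (\<Union>k\<le>m. multisets_of_size {1..m} k)" by (auto simp: multisets_of_size_def)
  qed
qed

lemma finite_partitions_A: "0 \<notin> A \<Longrightarrow> finite (partitions_A A m)"
  unfolding partitions_A_def by (rule finite_subset[OF _ finite_msets_sum_le[of A m]]) auto

lemma finite_dpartitions_A: "0 \<notin> A \<Longrightarrow> finite (dpartitions_A A m)"
  unfolding dpartitions_A_def by (rule finite_subset[OF _ finite_msets_sum_le[of A m]]) auto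

lemma card_even_size_minus_card_odd_size:
  assumes "finite P"
  shows "int (card {M\<in>P. even (size M)}) - int (card {M\<in>P. odd (size M)})
         = (\<Sum>M\<in>P. (-1::int) ^ size (M :: 'a multiset))"
proof -
  have "(\<Sum>M\<in>P. (-1::int) ^ size M) = (\<Sum>M\<in>P. of_bool (even (size M)) - of_bool (odd (size M)))"
    by (rule sum.cong) auto
  then show ?thesis
    using assms by (simp add: sum_subtractf sum.inter_filter [symmetric] Collect_conj_eq Int_commute)
qed

definition toggle_part :: "'a \<Rightarrow> 'a multiset \<times> 'a multiset \<Rightarrow> 'a multiset \<times> 'a multiset" where
  "toggle_part b = (\<lambda>(U, D).
     if b \<in># D then (add_mset b U, D - {#b#}) else (U - {#b#}, add_mset b D))"

lemma toggle_part_toggle_part: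
  assumes "b \<in># U \<or> b \<in># D" and "count D b \<le> 1"
  shows "toggle_part b (toggle_part b (U, D)) = (U, D)"
  using assms by (auto simp: toggle_part_def in_diff_count)

lemma toggle_part_parts:
  assumes "b \<in># U \<or> b \<in># D" and "count D b \<le> 1" and "toggle_part b (U, D) = (U', D')"
  shows "set_mset U' \<union> set_mset D' = set_mset U \<union> set_mset D"
  using assms by (auto simp: toggle_part_def at_most_one_mset_mset_diff in_diff_count split: if_splits)

lemma toggle_part_sum:
  fixes U D :: "'a::comm_monoid_add multiset"
  assumes "b \<in># U \<or> b \<in># D" and "toggle_part b (U, D) = (U', D')"
  shows "sum_mset U' + sum_mset D' = sum_mset U + sum_mset D"
  using assms by (auto simp: toggle_part_def sum_mset.remove ac_simps split: if_splits)

lemma toggle_part_parity: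
  assumes "b \<in># U \<or> b \<in># D" and "toggle_part b (U, D) = (U', D')"
  shows "odd (size U') \<longleftrightarrow> even (size U)" and "odd (size D') \<longleftrightarrow> even (size D)"
  using assms by (auto simp: toggle_part_def size_Diff_singleton split: if_splits)

lemma toggle_part_distinct:
  assumes "\<forall>x. count D x \<le> 1" and "toggle_part b (U, D) = (U', D')"
  shows "\<forall>x. count D' x \<le> 1" and "set_mset D' \<subseteq> insert b (set_mset D)"
  using assms by (auto simp: toggle_part_def not_in_iff split: if_splits dest: in_diffD)

(* These pairs are counted by the coefficient of x^m in P_B(x) Q_(B-E)(x). *)
definition mixed_partitions ::
    "nat set \<Rightarrow> nat set \<Rightarrow> nat \<Rightarrow> (nat multiset \<times> nat multiset) set" where
  "mixed_partitions B E m = {(U, D). set_mset U \<subseteq> B \<and> set_mset D \<subseteq> B - E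
     \<and> (\<forall>x. count D x \<le> 1) \<and> sum_mset U + sum_mset D = m}"

lemma finite_mixed_partitions:
  assumes "0 \<notin> B"
  shows "finite (mixed_partitions B E m)"
proof (rule finite_subset)
  let ?S = "{M :: nat multiset. set_mset M \<subseteq> B \<and> sum_mset M \<le> m}"
  show "mixed_partitions B E m \<subseteq> ?S \<times> ?S"
    by (auto simp: mixed_partitions_def)
  show "finite (?S \<times> ?S)"
    using finite_msets_sum_le[OF assms] by blast
qed

definition toggle_least_part ::
    "'a::linorder set \<Rightarrow> 'a multiset \<times> 'a multiset \<Rightarrow> 'a multiset \<times> 'a multiset" where
  "toggle_least_part E = (\<lambda>(U, D). toggle_part (Min (set_mset U \<union> set_mset D - E)) (U, D))"

lemma sum_mixed_partitions_eq_sum_fixed: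
  fixes g :: "nat multiset \<times> nat multiset \<Rightarrow> 'b::ab_group_add"
  assumes "0 \<notin> B"
    and sign: "\<And>U D U' D'. odd (size U') \<longleftrightarrow> even (size U) \<Longrightarrow> odd (size D') \<longleftrightarrow> even (size D)
                \<Longrightarrow> g (U', D') = - g (U, D)"
  shows "sum g (mixed_partitions B E m)
       = sum g {(U, D) \<in> mixed_partitions B E m. set_mset U \<union> set_mset D \<subseteq> E}"
    (is "sum g ?X = sum g ?F")
proof -
  have "sum g (?X - ?F) = 0"
  proof (rule sum_involution_eq_0[where h = "toggle_least_part E"])
    fix x assume x: "x \<in> ?X - ?F"
    obtain U D where [simp]: "x = (U, D)" by (cases x)
    obtain U' D' where toggled: "toggle_least_part E x = (U', D')" by (cases "toggle_least_part E x")
    define b where "b = Min (set_mset U \<union> set_mset D - E)"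
    have "b \<in> set_mset U \<union> set_mset D - E"
      unfolding b_def using x by (intro Min_in) auto
    then have part: "b \<in># U \<or> b \<in># D" and "b \<notin> E" by auto
    have distinct: "\<forall>x. count D x \<le> 1" using x by (simp add: mixed_partitions_def)
    have t: "toggle_part b (U, D) = (U', D')"
      using toggled by (simp add: toggle_least_part_def b_def)
    note parts = toggle_part_parts[OF part spec[OF distinct] t]
      and parity = toggle_part_parity[OF part t]
    from x parts \<open>b \<notin> E\<close> toggle_part_sum[OF part t] toggle_part_distinct[OF distinct t]
    show "toggle_least_part E x \<in> ?X - ?F"
      unfolding toggled by (auto simp: mixed_partitions_def)
    (* Toggling keeps the set of parts, hence the least part outside E. *)
    have "toggle_least_part E (U', D') = toggle_part b (U', D')"
      by (simp add: toggle_least_part_def parts b_def)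
    then show "toggle_least_part E (toggle_least_part E x) = x"
      using toggle_part_toggle_part[OF part spec[OF distinct]] t toggled by simp
    show "toggle_least_part E x \<noteq> x"
      using parity(1) toggled by auto
    show "g (toggle_least_part E x) + g x = 0"
      using sign[OF parity] toggled by simp
  qed
  moreover have "sum g ?X = sum g (?X - ?F) + sum g ?F"
    using finite_mixed_partitions[OF assms(1)] by (intro sum.subset_diff) auto
  ultimately show ?thesis by simp
qed

lemma minus_one_power_flip: "odd a \<longleftrightarrow> even b \<Longrightarrow> (-1::int) ^ a = - ((-1) ^ b)"
  by (auto simp: minus_one_power_iff)

lemma sum_mixed_partitions_sign_empty:
  assumes "0 \<notin> B"
  shows "(\<Sum>(U, D)\<in>mixed_partitions B {} m. (-1::int) ^ size D) = of_bool (m = 0)"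
proof -
  have "{(U, D) \<in> mixed_partitions B {} m. set_mset U \<union> set_mset D \<subseteq> {}}
      = (if m = 0 then {({#}, {#})} else {})"
    by (auto simp: mixed_partitions_def)
  then show ?thesis
    using sum_mixed_partitions_eq_sum_fixed[OF assms, of "\<lambda>(U, D). (-1::int) ^ size D" "{}" m]
    by (simp add: minus_one_power_flip)
qed

lemma sum_mixed_partitions_sign_singleton:
  assumes "0 \<notin> B" and "a \<in> B"
  shows "(\<Sum>(U, D)\<in>mixed_partitions B {a} m. (-1::int) ^ size U)
       = (if a dvd m then (-1) ^ (m div a) else 0)"
proof -
  have "a > 0" using assms by (metis gr0I)
  have "{(U, D) \<in> mixed_partitions B {a} m. set_mset U \<union> set_mset D \<subseteq> {a}}
      = (if a dvd m then {(replicate_mset (m div a) a, {#})} else {})"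
  proof (intro equalityI subsetI)
    fix x assume x: "x \<in> {(U, D) \<in> mixed_partitions B {a} m. set_mset U \<union> set_mset D \<subseteq> {a}}"
    obtain U D where x_eq: "x = (U, D)" by (cases x)
    with x have "set_mset U \<subseteq> {a}" "set_mset D \<subseteq> B - {a}" "set_mset D \<subseteq> {a}"
      "sum_mset U + sum_mset D = m"
      by (auto simp: mixed_partitions_def)
    moreover from this(2,3) have "set_mset D = {}" by blast
    ultimately have [simp]: "x = (U, {#})" and "sum_mset U = m"
      and U_eq: "U = replicate_mset (size U) a"
      using x_eq by (auto intro: set_mset_subset_singletonD)
    have "size U * a = m" using \<open>sum_mset U = m\<close> by (subst (asm) U_eq) simp
    then show "x \<in> (if a dvd m then {(replicate_mset (m div a) a, {#})} else {})"
      using \<open>a > 0\<close> U_eq by auto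
  qed (use assms in \<open>auto simp: mixed_partitions_def split: if_splits\<close>)
  then show ?thesis
    using sum_mixed_partitions_eq_sum_fixed[OF assms(1), of "\<lambda>(U, D). (-1::int) ^ size U" "{a}" m]
    by (simp add: minus_one_power_flip)
qed

definition occurrences :: "'a multiset \<Rightarrow> ('a \<times> nat) set" where
  "occurrences M = (SIGMA a:set_mset M. {1..count M a})"

lemma finite_occurrences: "finite (occurrences M)"
  by (simp add: occurrences_def)

lemma card_occurrences: "card (occurrences M) = size M"
  by (simp add: occurrences_def size_multiset_overloaded_eq)

lemma sum_convolution_eq_sum_Sigma:
  fixes f :: "'d \<Rightarrow> 'b::comm_semiring_1"
  assumes "finite K" "\<And>k. finite (P k)" "\<And>M. finite (R M)" "\<And>k. finite (Q k)"
  shows "(\<Sum>k\<in>K. of_nat (\<Sum>M\<in>P k. card (R M)) * (\<Sum>D\<in>Q k. f D))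
       = (\<Sum>(k, M, r, D)\<in>(SIGMA k:K. SIGMA M:P k. R M \<times> Q k). f D)"
proof -
  have "of_nat (card (R M)) * (\<Sum>D\<in>Q k. f D) = (\<Sum>(r, D)\<in>R M \<times> Q k. f D)" for M k
    by (simp add: sum.cartesian_product[symmetric])
  then have "of_nat (\<Sum>M\<in>P k. card (R M)) * (\<Sum>D\<in>Q k. f D)
      = (\<Sum>(M, r, D)\<in>(SIGMA M:P k. R M \<times> Q k). f D)" for k
    using assms by (simp add: sum_distrib_right sum.Sigma split_def)
  then show ?thesis
    using assms by (simp add: sum.Sigma split_def)
qed

lemma finite_multiple_pairs:
  fixes A :: "nat set"
  assumes "0 \<notin> A"
  shows "finite {(a, j). a \<in> A \<and> 0 < j \<and> a * j \<le> n}"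
proof (rule finite_subset)
  show "{(a, j). a \<in> A \<and> 0 < j \<and> a * j \<le> n} \<subseteq> {..n} \<times> {..n}"
  proof clarify
    fix a j assume "a \<in> A" "0 < j" "a * j \<le> n"
    moreover have "a > 0" using \<open>a \<in> A\<close> assms by (metis gr0I)
    ultimately have "a \<le> a * j" "j \<le> a * j" by simp_all
    with \<open>a * j \<le> n\<close> have "a \<le> n" "j \<le> n" by linarith+
    then show "a \<in> {..n} \<and> j \<in> {..n}" by simp
  qed
qed simp

lemma bij_betw_partition_occurrences_mixed_partitions:
  fixes A :: "nat set"
  assumes A: "0 \<notin> A"
  shows "bij_betw (\<lambda>(k, M, (a, j), D). ((a, j), (M - replicate_mset j a, D)))
           (SIGMA k:{1..n}. SIGMA M:partitions_A A k. occurrences M \<times> dpartitions_A A (n - k))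
           (SIGMA (a, j):{(a, j). a \<in> A \<and> 0 < j \<and> a * j \<le> n}. mixed_partitions A {} (n - a * j))"
  unfolding bij_betw_iff_bijections
proof (intro exI[where x = "\<lambda>((a, j), (U, D)). (a * j + sum_mset U, U + replicate_mset j a, (a, j), D)"]
       conjI ballI)
  fix x assume "x \<in> (SIGMA k:{1..n}. SIGMA M:partitions_A A k. occurrences M \<times> dpartitions_A A (n - k))"
  then obtain k M a j D where x: "x = (k, M, (a, j), D)" and "k \<in> {1..n}"
    "set_mset M \<subseteq> A" "sum_mset M = k" "a \<in># M" "0 < j" "j \<le> count M a"
    "D \<in> dpartitions_A A (n - k)"
    by (auto simp: partitions_A_def occurrences_def)
  moreover have M: "M = (M - replicate_mset j a) + replicate_mset j a"
    using \<open>j \<le> count M a\<close> by (simp add: count_le_replicate_mset_subset_eq subset_mset.diff_add)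
  moreover have "set_mset (M - replicate_mset j a) \<subseteq> A"
    using \<open>set_mset M \<subseteq> A\<close> by (meson in_diffD subset_iff)
  moreover have "sum_mset M = sum_mset (M - replicate_mset j a) + a * j"
    by (subst M) simp
  ultimately show "(\<lambda>(k, M, (a, j), D). ((a, j), (M - replicate_mset j a, D))) x
        \<in> (SIGMA (a, j):{(a, j). a \<in> A \<and> 0 < j \<and> a * j \<le> n}. mixed_partitions A {} (n - a * j))"
    and "(\<lambda>((a, j), (U, D)). (a * j + sum_mset U, U + replicate_mset j a, (a, j), D))
        ((\<lambda>(k, M, (a, j), D). ((a, j), (M - replicate_mset j a, D))) x) = x"
    by (auto simp: mixed_partitions_def dpartitions_A_def)
next
  fix y
  assume "y \<in> (SIGMA (a, j):{(a, j). a \<in> A \<and> 0 < j \<and> a * j \<le> n}. mixed_partitions A {} (n - a * j))"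
  then obtain a j U D where y: "y = ((a, j), (U, D))" and "a \<in> A" "0 < j" "a * j \<le> n"
    "(U, D) \<in> mixed_partitions A {} (n - a * j)"
    by auto
  moreover have "0 < a * j + sum_mset U"
    using \<open>a \<in> A\<close> \<open>0 < j\<close> A by (metis gr0I nat_0_less_mult_iff trans_less_add1)
  ultimately show "(\<lambda>((a, j), (U, D)). (a * j + sum_mset U, U + replicate_mset j a, (a, j), D)) y
        \<in> (SIGMA k:{1..n}. SIGMA M:partitions_A A k. occurrences M \<times> dpartitions_A A (n - k))"
    and "(\<lambda>(k, M, (a, j), D). ((a, j), (M - replicate_mset j a, D)))
        ((\<lambda>((a, j), (U, D)). (a * j + sum_mset U, U + replicate_mset j a, (a, j), D)) y) = y"
    by (auto simp: mixed_partitions_def partitions_A_def dpartitions_A_def occurrences_def Suc_le_eq)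
qed

lemma bij_betw_divisors_factor_pairs:
  fixes A :: "nat set"
  assumes "0 < n"
  shows "bij_betw (\<lambda>a. (a, n div a)) {a\<in>A. a dvd n} {(a, j). a \<in> A \<and> a * j = n}"
  by (rule bij_betw_byWitness[where f' = fst]) (use assms in auto)

lemma sum_Np_times_signed_q:
  fixes A :: "nat set"
  assumes A: "0 \<notin> A" and "0 < n"
  shows "(\<Sum>k=1..n. int (Np A k) * (int (qe A (n - k)) - int (qo A (n - k)))) = int (tauA A n)"
proof -
  let ?AJ = "{(a, j). a \<in> A \<and> 0 < j \<and> a * j \<le> n}"
  have "(\<Sum>k=1..n. int (Np A k) * (int (qe A (n - k)) - int (qo A (n - k))))
      = (\<Sum>k=1..n. of_nat (\<Sum>M\<in>partitions_A A k. card (occurrences M))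
                    * (\<Sum>D\<in>dpartitions_A A (n - k). (-1::int) ^ size D))"
    by (simp add: Np_def qe_def qo_def card_occurrences card_even_size_minus_card_odd_size
        finite_dpartitions_A A)
  also have "\<dots> = (\<Sum>(k, M, (a, j), D)\<in>(SIGMA k:{1..n}. SIGMA M:partitions_A A k.
                     occurrences M \<times> dpartitions_A A (n - k)). (-1) ^ size D)"
    by (subst sum_convolution_eq_sum_Sigma)
      (simp_all add: finite_partitions_A finite_dpartitions_A finite_occurrences A split_def)
  also have "\<dots> = (\<Sum>((a, j), U, D)\<in>(SIGMA (a, j):?AJ. mixed_partitions A {} (n - a * j)).
                     (-1) ^ size D)"
    by (subst sum.reindex_bij_betw[OF bij_betw_partition_occurrences_mixed_partitions[OF A], symmetric])
      (simp add: split_def)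
  also have "\<dots> = (\<Sum>(a, j)\<in>?AJ. \<Sum>(U, D)\<in>mixed_partitions A {} (n - a * j). (-1) ^ size D)"
    using finite_multiple_pairs[OF A] finite_mixed_partitions[OF A]
    unfolding split_def by (subst sum.Sigma) (auto simp: split_def)
  also have "\<dots> = (\<Sum>p\<in>?AJ. of_bool (fst p * snd p = n))"
    by (rule sum.cong) (auto simp: sum_mixed_partitions_sign_empty A)
  also have "\<dots> = int (card {(a, j). a \<in> A \<and> a * j = n})"
    using finite_multiple_pairs[OF A] \<open>0 < n\<close> by (auto intro!: arg_cong[where f = card])
  also have "\<dots> = int (tauA A n)"
    unfolding tauA_def using bij_betw_same_card[OF bij_betw_divisors_factor_pairs[OF \<open>0 < n\<close>]] by simp
  finally show ?thesis .
qed

lemma bij_betw_dpartition_occurrences_mixed_partitions: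
  fixes A :: "nat set"
  assumes A: "0 \<notin> A"
  shows "bij_betw (\<lambda>(k, M, (a, j), S). (a, (S, M - {#a#})))
           (SIGMA k:{1..n}. SIGMA M:dpartitions_A A k. occurrences M \<times> partitions_A A (n - k))
           (SIGMA a:{a\<in>A. a \<le> n}. mixed_partitions A {a} (n - a))"
  unfolding bij_betw_iff_bijections
proof (intro exI[where x = "\<lambda>(a, (U, D)). (a + sum_mset D, add_mset a D, (a, 1), U)"] conjI ballI)
  fix x assume "x \<in> (SIGMA k:{1..n}. SIGMA M:dpartitions_A A k. occurrences M \<times> partitions_A A (n - k))"
  then obtain k M a j S where x: "x = (k, M, (a, j), S)" and "k \<in> {1..n}"
    "set_mset M \<subseteq> A" "\<forall>y. count M y \<le> 1" "sum_mset M = k" "a \<in># M" "0 < j" "j \<le> count M a"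
    "S \<in> partitions_A A (n - k)"
    by (auto simp: dpartitions_A_def occurrences_def)
  moreover have "count M a \<le> 1"
    using \<open>\<forall>y. count M y \<le> 1\<close> by blast
  then have "j = 1" and "a \<notin># M - {#a#}"
    using \<open>0 < j\<close> \<open>j \<le> count M a\<close> by (auto simp: in_diff_count)
  moreover have "sum_mset M = a + sum_mset (M - {#a#})"
    using \<open>a \<in># M\<close> by (simp add: sum_mset.remove)
  moreover have "set_mset (M - {#a#}) \<subseteq> A" "\<forall>y. count (M - {#a#}) y \<le> 1"
    using \<open>set_mset M \<subseteq> A\<close> \<open>\<forall>y. count M y \<le> 1\<close> by (auto dest: in_diffD intro: le_trans)
  ultimately show "(\<lambda>(k, M, (a, j), S). (a, (S, M - {#a#}))) x
        \<in> (SIGMA a:{a\<in>A. a \<le> n}. mixed_partitions A {a} (n - a))"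
    and "(\<lambda>(a, (U, D)). (a + sum_mset D, add_mset a D, (a, 1), U))
        ((\<lambda>(k, M, (a, j), S). (a, (S, M - {#a#}))) x) = x"
    by (auto simp: mixed_partitions_def partitions_A_def)
next
  fix y assume "y \<in> (SIGMA a:{a\<in>A. a \<le> n}. mixed_partitions A {a} (n - a))"
  then obtain a U D where y: "y = (a, (U, D))" and "a \<in> A" "a \<le> n"
    "(U, D) \<in> mixed_partitions A {a} (n - a)"
    by auto
  moreover have "0 < a" using \<open>a \<in> A\<close> A by (metis gr0I)
  moreover have "count (add_mset a D) x \<le> 1" for x
    using \<open>(U, D) \<in> mixed_partitions A {a} (n - a)\<close>
    by (cases "x = a") (auto simp: mixed_partitions_def not_in_iff)
  ultimately show "(\<lambda>(a, (U, D)). (a + sum_mset D, add_mset a D, (a, 1), U)) y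
        \<in> (SIGMA k:{1..n}. SIGMA M:dpartitions_A A k. occurrences M \<times> partitions_A A (n - k))"
    and "(\<lambda>(k, M, (a, j), S). (a, (S, M - {#a#})))
        ((\<lambda>(a, (U, D)). (a + sum_mset D, add_mset a D, (a, 1), U)) y) = y"
    by (auto simp: mixed_partitions_def partitions_A_def dpartitions_A_def occurrences_def Suc_le_eq)
qed

lemma sum_Nq_times_signed_p:
  fixes A :: "nat set"
  assumes A: "0 \<notin> A" and "0 < n"
  shows "(\<Sum>k=1..n. int (Nq A k) * (int (pe A (n - k)) - int (po A (n - k)))) = tauA_s A n"
proof -
  have "(\<Sum>k=1..n. int (Nq A k) * (int (pe A (n - k)) - int (po A (n - k))))
      = (\<Sum>k=1..n. of_nat (\<Sum>M\<in>dpartitions_A A k. card (occurrences M))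
                    * (\<Sum>S\<in>partitions_A A (n - k). (-1::int) ^ size S))"
    by (simp add: Nq_def pe_def po_def card_occurrences card_even_size_minus_card_odd_size
        finite_partitions_A A)
  also have "\<dots> = (\<Sum>(k, M, (a, j), S)\<in>(SIGMA k:{1..n}. SIGMA M:dpartitions_A A k.
                     occurrences M \<times> partitions_A A (n - k)). (-1) ^ size S)"
    by (subst sum_convolution_eq_sum_Sigma)
      (simp_all add: finite_partitions_A finite_dpartitions_A finite_occurrences A split_def)
  also have "\<dots> = (\<Sum>(a, U, D)\<in>(SIGMA a:{a\<in>A. a \<le> n}. mixed_partitions A {a} (n - a)).
                     (-1) ^ size U)"
    by (subst sum.reindex_bij_betw[OF bij_betw_dpartition_occurrences_mixed_partitions[OF A], symmetric])
      (simp add: split_def)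
  also have "\<dots> = (\<Sum>a\<in>{a\<in>A. a \<le> n}. \<Sum>(U, D)\<in>mixed_partitions A {a} (n - a). (-1) ^ size U)"
    using finite_mixed_partitions[OF A] unfolding split_def by (subst sum.Sigma) (auto simp: split_def)
  also have "\<dots> = (\<Sum>a\<in>{a\<in>A. a \<le> n}. if a dvd n then (-1) ^ (n div a - 1) else 0)"
  proof (rule sum.cong)
    fix a assume a: "a \<in> {a\<in>A. a \<le> n}"
    then have "0 < a" using A by (metis (mono_tags) gr0I mem_Collect_eq)
    have n: "n = (n - a) + a" using a by simp
    have "a dvd (n - a) \<longleftrightarrow> a dvd n"
      by (subst (2) n) simp
    moreover have "n div a - 1 = (n - a) div a"
      using \<open>0 < a\<close> by (subst n) (simp add: div_add_self2)
    ultimately show "(\<Sum>(U, D)\<in>mixed_partitions A {a} (n - a). (-1) ^ size U)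
        = (if a dvd n then (-1::int) ^ (n div a - 1) else 0)"
      using a A by (simp add: sum_mixed_partitions_sign_singleton)
  qed simp
  also have "\<dots> = tauA_s A n"
  proof -
    have "{a\<in>A. a dvd n} = {a\<in>{a\<in>A. a \<le> n}. a dvd n}"
      using \<open>0 < n\<close> by (auto dest: dvd_imp_le)
    then show ?thesis
      unfolding tauA_s_def by (metis (no_types) sum.inter_filter finite_Collect_conjI finite_Collect_le_nat)
  qed
  finally show ?thesis .
qed

theorem theorem2:
  fixes A :: "nat set" and n :: nat
  assumes "A \<noteq> {}" and "0 \<notin> A" and "n > 0"
  shows "(\<Sum>k=1..n. int (Np A k) * (int (qe A (n - k)) - int (qo A (n - k)))) = int (tauA A n)
       \<and> (\<Sum>k=1..n. int (Nq A k) * (int (pe A (n - k)) - int (po A (n - k)))) = tauA_s A n"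
  using sum_Np_times_signed_q[OF assms(2,3)] sum_Nq_times_signed_p[OF assms(2,3)] by simp

end
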